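(* Let $M,N\ge 0$ be integers, $a_0,\dots,a_M\in\mathbb{R}$, $f_M(x)=\sum_{m=0}^M a_mT_m(x)$. For $0\le n\le N$ and $y\in[-1,1]$ let $\tilde R_n(y)=\int_{-1}^{y}f_M(y-1-t)T_n(t)\,\mathrm{d}t=\sum_{k=0}^{M+N+1}R_{k,n}T_k(y)$, and set $R_{M+N+2,n}:=0$. For $k\ge1$ let $\varepsilon_k=2$ if $k=1$ and $\varepsilon_k=1$ if $k\ge 2$. Then for every $1\le k\le M+N$: $$R_{k,1}=-R_{k,0}+\frac{\varepsilon_k}{2k}R_{k-1,0}-\frac{1}{2k}R_{k+1,0}\qquad(\text{if } N\ge1),$$ $$R_{k,2}=R_{k,0}+\frac{2\varepsilon_k}{k}R_{k-1,1}-\frac{2}{k}R_{k+1,1}\qquad(\text{if } N\ge2),$$ and for $2\le n\le N-1$, $$R_{k,n+1}=\frac{2(-1)^n}{n-1}R_{k,0}+\frac{n+1}{n-1}R_{k,n-1}+\frac{\varepsilon_k(n+1)}{k}R_{k-1,n}-\frac{n+1}{k}R_{k+1,n}.$$ Moreover, for every $1\le n\le N$, $$R_{0,n}=\sum_{j=1}^{M+n+1}(-1)^{j+1}R_{j,n}.$$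
   Context: $T_m(x)=\cos(m\arccos x)$ is the $m$-th Chebyshev polynomial. Each $\tilde R_n$ is a polynomial of degree at most $M+n+1$, so $R_{k,n}=0$ for $k>M+n+1$; $R$ is the $(M+N+2)\times(N+1)$ Chebyshev convolution matrix of $f_M$. *)

theory Defs
  imports "HOL-Analysis.Analysis"
begin

text \<open>Chebyshev polynomials of the first kind, as polynomial functions on all of the
reals (needed since f_M is evaluated at y-1-t, which ranges over [-3,1]).
On [-1,1] they coincide with cos(m * arccos x).\<close>
fun cheb :: "nat \<Rightarrow> real \<Rightarrow> real" where
  "cheb 0 x = 1"
| "cheb (Suc 0) x = x"
| "cheb (Suc (Suc n)) x = 2 * x * cheb (Suc n) x - cheb n x"

definition chebsum :: "nat \<Rightarrow> (nat \<Rightarrow> real) \<Rightarrow> real \<Rightarrow> real" where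
  "chebsum M a x = (\<Sum>m\<le>M. a m * cheb m x)"

definition eps_cheb :: "nat \<Rightarrow> real" where
  "eps_cheb k = (if k = 1 then 2 else 1)"

end

theory Submission
  imports Defs "HOL-Computational_Algebra.Polynomial"
begin

text \<open>
  Let J g y = \<integral> f_M(y - 1 - t) g(t) dt over [-1, y] and P_n = \<Sum>_k R_{k,n} T_k, so that
  J T_n = P_n on [-1, 1]. The integral is symmetric in f_M and g, and differentiating the
  kernel gives (J g)' = g(-1) f_M + J g' for polynomial g; for g = 1 this reads P_0' = f_M.
  If S = \<alpha> T_{n+1} - \<beta> T_{n'} is an antiderivative of T_n (S = T_1, S = T_2/4, or
  S = T_{n+1}/(2(n+1)) - T_{n-1}/(2(n-1))), it follows that
  \<alpha> P_{n+1} - \<beta> P_{n'} - S(-1) P_0 is an antiderivative of P_n. Expanding both sides in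
  second-kind Chebyshev polynomials U_k, via T_k' = k U_{k-1} and 2 T_k = U_k - U_{k-2},
  turns "D' = E" into 2k d_k = \<epsilon>_k e_{k-1} - e_{k+1} for the coefficients of D and E;
  this is the three-term recurrence. The same antiderivative relation shows by induction
  that deg P_n \<le> M + n + 1, and J T_n (-1) = 0 then gives the alternating sum for R_{0,n}.
\<close>

lemma sum_atMost_shift_two:
  fixes f :: "nat \<Rightarrow> 'a::comm_monoid_add"
  shows "(\<Sum>m\<le>K. if 2 \<le> m then f (m - 2) else 0) = (\<Sum>m\<le>K. if m + 2 \<le> K then f m else 0)"
proof -
  have "(\<Sum>m\<in>{m\<in>{..K}. 2 \<le> m}. f (m - 2)) = (\<Sum>m\<in>{m\<in>{..K}. m + 2 \<le> K}. f m)"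
    by (rule sum.reindex_bij_witness[of _ "\<lambda>m. m + 2" "\<lambda>m. m - 2"]) auto
  then show ?thesis
    by (simp only: sum.inter_filter[OF finite_atMost])
qed

lemma smult_sum_right: "smult c (\<Sum>x\<in>A. f x) = (\<Sum>x\<in>A. smult c (f x))"
  by (induction A rule: infinite_finite_induct) (simp_all add: smult_add_right)

lemma pderiv_sum: "pderiv (\<Sum>x\<in>A. f x) = (\<Sum>x\<in>A. pderiv (f x))"
  by (induction A rule: infinite_finite_induct) (simp_all add: pderiv_add)

lemma poly_eqI_on_infinite:
  fixes p q :: "'a::idom poly"
  assumes "infinite S" "\<And>x. x \<in> S \<Longrightarrow> poly p x = poly q x"
  shows "p = q"
proof (rule ccontr)
  assume "p \<noteq> q"
  then have "finite {x. poly (p - q) x = 0}"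
    by (intro poly_roots_finite) simp
  moreover have "S \<subseteq> {x. poly (p - q) x = 0}"
    using assms(2) by auto
  ultimately show False
    using assms(1) finite_subset by blast
qed

lemma coeff_sum_smult_top:
  fixes p :: "nat \<Rightarrow> 'a::comm_ring_1 poly"
  assumes "\<And>k. degree (p k) \<le> k"
  shows "coeff (\<Sum>k\<le>K. smult (c k) (p k)) K = c K * coeff (p K) K"
proof -
  have "coeff (p k) K = 0" if "k < K" for k
    using assms[of k] that by (intro coeff_eq_0) simp
  then show ?thesis
    by (simp add: coeff_sum lessThan_Suc_atMost[symmetric])
qed

lemma triangular_sum_coeffs_eq_0:
  fixes p :: "nat \<Rightarrow> 'a::idom poly"
  assumes deg: "\<And>k. degree (p k) \<le> k" and lead: "\<And>k. coeff (p k) k \<noteq> 0"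
    and high: "\<And>i. j \<le> i \<Longrightarrow> coeff (\<Sum>k\<le>K. smult (c k) (p k)) i = 0"
    and "j \<le> k" "k \<le> K"
  shows "c k = 0"
  using high assms(4,5)
proof (induction K)
  case 0
  then show ?case
    using "0.prems"(1)[of 0] coeff_sum_smult_top[OF deg, of c 0] lead[of 0] by simp
next
  case (Suc K)
  have top: "c (Suc K) = 0"
    using Suc.prems coeff_sum_smult_top[OF deg, of c "Suc K"] lead[of "Suc K"] by simp
  show ?case
  proof (cases "k = Suc K")
    case False
    with Suc top show ?thesis by simp
  qed (use top in simp)
qed

lemma three_term_recurrence_degree:
  fixes p :: "nat \<Rightarrow> 'a::linordered_idom poly"
  assumes rec: "\<And>n. p (Suc (Suc n)) = [:0, 2:] * p (Suc n) - p n"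
    and "degree (p 0) = 0" "coeff (p 0) 0 > 0" "degree (p 1) \<le> 1" "coeff (p 1) 1 > 0"
  shows "degree (p n) \<le> n \<and> coeff (p n) n > 0"
proof (induction n rule: induct_nat_012)
  case (ge2 n)
  have "degree ([:0, 2:] * p (Suc n)) \<le> Suc (Suc n)"
    using ge2 degree_mult_le[of "[:0, 2:]" "p (Suc n)"] by simp
  moreover have "degree (p n) < Suc (Suc n)"
    using ge2 by (simp add: le_imp_less_Suc)
  ultimately show ?case
    using ge2 by (auto simp: rec coeff_eq_0 intro: degree_diff_le)
qed (use assms in auto)

section \<open>Chebyshev polynomials of the first and second kind\<close>

fun cheb_poly :: "nat \<Rightarrow> real poly" where
  "cheb_poly 0 = 1"
| "cheb_poly (Suc 0) = [:0, 1:]"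
| "cheb_poly (Suc (Suc n)) = [:0, 2:] * cheb_poly (Suc n) - cheb_poly n"

fun cheb2_poly :: "nat \<Rightarrow> real poly" where
  "cheb2_poly 0 = 1"
| "cheb2_poly (Suc 0) = [:0, 2:]"
| "cheb2_poly (Suc (Suc n)) = [:0, 2:] * cheb2_poly (Suc n) - cheb2_poly n"

lemma poly_cheb_poly [simp]: "poly (cheb_poly n) = cheb n"
proof
  show "poly (cheb_poly n) x = cheb n x" for x
    by (induction n rule: cheb_poly.induct) auto
qed

lemma poly_cheb_poly_minus_one: "poly (cheb_poly n) (-1) = (-1) ^ n"
  by (induction n rule: cheb_poly.induct) auto

lemma degree_cheb_poly: "degree (cheb_poly n) \<le> n"
  and coeff_cheb_poly_pos: "coeff (cheb_poly n) n > 0"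
  using three_term_recurrence_degree[of cheb_poly n] by simp_all

lemma degree_cheb2_poly: "degree (cheb2_poly n) \<le> n"
  and coeff_cheb2_poly_pos: "coeff (cheb2_poly n) n > 0"
  using three_term_recurrence_degree[of cheb2_poly n] by simp_all

lemma two_cheb_eq_cheb2_poly:
  "2 * cheb (Suc (Suc n)) x = poly (cheb2_poly (Suc (Suc n))) x - poly (cheb2_poly n) x"
proof (induction n rule: cheb_poly.induct)
  case (3 n)
  have "2 * cheb (Suc (Suc (Suc (Suc n)))) x
      = 2 * x * (2 * cheb (Suc (Suc (Suc n))) x) - 2 * cheb (Suc (Suc n)) x"
    by (simp add: algebra_simps)
  also have "\<dots> = 2 * x * (poly (cheb2_poly (Suc (Suc (Suc n)))) x - poly (cheb2_poly (Suc n)) x)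
      - (poly (cheb2_poly (Suc (Suc n))) x - poly (cheb2_poly n) x)"
    by (simp only: 3)
  also have "\<dots> = poly (cheb2_poly (Suc (Suc (Suc (Suc n))))) x - poly (cheb2_poly (Suc (Suc n))) x"
    by (simp add: algebra_simps)
  finally show ?case .
qed (simp_all add: algebra_simps)

lemma smult_2_cheb_poly:
  "smult 2 (cheb_poly m)
     = smult (eps_cheb (Suc m)) (cheb2_poly m) - (if 2 \<le> m then cheb2_poly (m - 2) else 0)"
proof (cases m rule: cheb_poly.cases)
  case (3 n)
  then show ?thesis
    using two_cheb_eq_cheb2_poly[of n]
    by (intro poly_eqI_on_infinite[OF infinite_UNIV_char_0]) (simp add: eps_cheb_def)
qed (simp_all add: eps_cheb_def)

lemma pderiv_cheb_poly: "pderiv (cheb_poly n) = of_nat n * cheb2_poly (n - 1)"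
proof (induction n rule: cheb_poly.induct)
  case (3 n)
  have "pderiv (cheb_poly (Suc (Suc n)))
      = smult 2 (cheb_poly (Suc n)) + [:0, 2:] * pderiv (cheb_poly (Suc n)) - pderiv (cheb_poly n)"
    by (simp add: pderiv_diff pderiv_mult pderiv_pCons pderiv_smult)
  also have "\<dots> = smult 2 (cheb_poly (Suc n)) + [:0, 2:] * (of_nat (Suc n) * cheb2_poly n)
      - of_nat n * cheb2_poly (n - 1)"
    by (simp only: 3 diff_Suc_1)
  also have "\<dots> = of_nat (Suc (Suc n)) * cheb2_poly (Suc n)"
    unfolding smult_2_cheb_poly
    by (cases n rule: cheb_poly.cases)
      (auto intro!: poly_eqI_on_infinite[OF infinite_UNIV_char_0] simp: eps_cheb_def algebra_simps)
  finally show ?case by simp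
qed (simp_all add: pderiv_pCons)

lemma pderiv_cheb_antiderivative:
  assumes "2 \<le> n"
  shows "pderiv (smult (1 / (2 * (real n + 1))) (cheb_poly (Suc n))
    - smult (1 / (2 * (real n - 1))) (cheb_poly (n - 1))) = cheb_poly n"
proof -
  have "1 / (2 * (real n + 1)) * real (Suc n) = 1 / 2"
    and "1 / (2 * (real n - 1)) * real (n - 1) = 1 / 2"
    using assms by (simp_all add: of_nat_diff field_simps)
  then have "pderiv (smult (1 / (2 * (real n + 1))) (cheb_poly (Suc n))
      - smult (1 / (2 * (real n - 1))) (cheb_poly (n - 1)))
      = smult (1 / 2) (cheb2_poly n - cheb2_poly (n - 2))"
    by (simp only: pderiv_diff pderiv_smult pderiv_cheb_poly diff_Suc_1 of_nat_mult_conv_smult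
        smult_smult smult_diff_right diff_diff_left one_add_one)
  also have "cheb2_poly n - cheb2_poly (n - 2) = smult 2 (cheb_poly n)"
    using assms smult_2_cheb_poly[of n] by (simp add: eps_cheb_def)
  finally show ?thesis
    by simp
qed

lemma cheb_antiderivative_at_minus_one:
  assumes "2 \<le> n"
  shows "1 / (2 * (real n + 1)) * (-1) ^ Suc n - 1 / (2 * (real n - 1)) * (-1) ^ (n - 1)
    = (-1) ^ n / ((real n + 1) * (real n - 1))"
proof -
  define A B where "A = real n + 1" and "B = real n - 1"
  have "A > 0" "B > 0" "A - B = 2"
    using assms by (auto simp: A_def B_def)
  moreover have "(-1::real) ^ (n - 1) = - ((-1) ^ n)"
    using assms by (cases n) auto
  ultimately have "1 / (2 * A) * (-1) ^ Suc n - 1 / (2 * B) * (-1) ^ (n - 1)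
      = (-1) ^ n * (A - B) / (2 * (A * B))"
    by (simp add: field_simps)
  then show ?thesis
    unfolding A_def[symmetric] B_def[symmetric] using \<open>A - B = 2\<close> by simp
qed

lemma cheb_has_antiderivative:
  "\<exists>\<alpha> \<beta> n'. \<alpha> \<noteq> 0 \<and> n' \<le> n
     \<and> pderiv (smult \<alpha> (cheb_poly (Suc n)) - smult \<beta> (cheb_poly n')) = cheb_poly n"
proof (cases "2 \<le> n")
  case True
  then show ?thesis
    using pderiv_cheb_antiderivative[OF True]
    by (intro exI[of _ "1 / (2 * (real n + 1))"] exI[of _ "1 / (2 * (real n - 1))"]
        exI[of _ "n - 1"]) auto
next
  case False
  then consider "n = 0" | "n = 1"
    by linarith
  then show ?thesis
  proof cases
    case 1
    then show ?thesis
      by (intro exI[of _ 1] exI[of _ 0]) (simp add: pderiv_pCons)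
  next
    case 2
    then show ?thesis
      by (intro exI[of _ "1 / 4"] exI[of _ 0] exI[of _ 0])
        (simp add: pderiv_diff pderiv_smult pderiv_pCons)
  qed
qed

lemma smult_2_cheb_sum_eq_cheb2_sum:
  "smult 2 (\<Sum>m\<le>K. smult (e m) (cheb_poly m))
     = (\<Sum>m\<le>K. smult (eps_cheb (Suc m) * e m - (if m + 2 \<le> K then e (m + 2) else 0)) (cheb2_poly m))"
proof -
  have "smult 2 (\<Sum>m\<le>K. smult (e m) (cheb_poly m)) = (\<Sum>m\<le>K. smult (e m) (smult 2 (cheb_poly m)))"
    by (simp add: smult_sum_right mult.commute)
  also have "\<dots> = (\<Sum>m\<le>K. smult (eps_cheb (Suc m) * e m) (cheb2_poly m))
      - (\<Sum>m\<le>K. if 2 \<le> m then smult (e (m - 2 + 2)) (cheb2_poly (m - 2)) else 0)"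
    unfolding smult_2_cheb_poly smult_diff_right sum_subtractf
    by (auto simp: mult.commute Suc_diff_Suc numeral_2_eq_2 intro!: sum.cong)
  also have "(\<Sum>m\<le>K. if 2 \<le> m then smult (e (m - 2 + 2)) (cheb2_poly (m - 2)) else 0)
      = (\<Sum>m\<le>K. smult (if m + 2 \<le> K then e (m + 2) else 0) (cheb2_poly m))"
    by (subst sum_atMost_shift_two) (auto intro!: sum.cong)
  finally show ?thesis
    by (simp add: smult_diff_left sum_subtractf)
qed

lemma pderiv_cheb_sum_eq_cheb2_sum:
  "pderiv (\<Sum>k\<le>K. smult (d k) (cheb_poly k))
     = (\<Sum>m\<le>K. smult (if m < K then real (Suc m) * d (Suc m) else 0) (cheb2_poly m))"
proof -
  have "pderiv (\<Sum>k\<le>K. smult (d k) (cheb_poly k))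
      = (\<Sum>k<Suc K. smult (real k * d k) (cheb2_poly (k - 1)))"
    by (simp add: pderiv_sum pderiv_smult pderiv_cheb_poly lessThan_Suc_atMost
        of_nat_mult_conv_smult mult.commute)
  also have "\<dots> = (\<Sum>m<K. smult (real (Suc m) * d (Suc m)) (cheb2_poly m))"
    by (simp only: sum.lessThan_Suc_shift) simp
  also have "\<dots> = (\<Sum>m\<le>K. smult (if m < K then real (Suc m) * d (Suc m) else 0) (cheb2_poly m))"
    by (simp add: lessThan_Suc_atMost[symmetric] del: of_nat_Suc)
  finally show ?thesis .
qed

lemma cheb_coeffs_of_pderiv:
  assumes deriv: "pderiv (\<Sum>k\<le>K. smult (d k) (cheb_poly k)) = (\<Sum>k\<le>K. smult (e k) (cheb_poly k))"
    and top: "e (Suc K) = 0" and k: "1 \<le> k" "k \<le> K"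
  shows "2 * real k * d k = eps_cheb k * e (k - 1) - e (k + 1)"
proof -
  define c where "c m = 2 * (if m < K then real (Suc m) * d (Suc m) else 0)
    - (eps_cheb (Suc m) * e m - (if m + 2 \<le> K then e (m + 2) else 0))" for m
  have vanish: "(\<Sum>m\<le>K. smult (c m) (cheb2_poly m)) = 0"
    using arg_cong[OF deriv, of "smult 2"]
    unfolding pderiv_cheb_sum_eq_cheb2_sum smult_2_cheb_sum_eq_cheb2_sum c_def
    by (simp add: smult_sum_right smult_diff_left sum_subtractf)
  obtain j where j: "k = Suc j"
    using k by (cases k) auto
  have "c j = 0"
    using vanish k j
    by (intro triangular_sum_coeffs_eq_0[where p = cheb2_poly and c = c and j = 0 and K = K])
      (auto simp: degree_cheb2_poly less_imp_neq[OF coeff_cheb2_poly_pos, symmetric])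
  moreover have "e (k + 1) = 0" if "\<not> k + 1 \<le> K"
  proof -
    have "k = K"
      using that k by simp
    then show ?thesis
      using top by simp
  qed
  ultimately show ?thesis
    using k j by (auto simp: c_def eps_cheb_def algebra_simps split: if_splits)
qed

section \<open>The convolution integral\<close>

definition conv_int :: "(real \<Rightarrow> real) \<Rightarrow> (real \<Rightarrow> real) \<Rightarrow> real \<Rightarrow> real" where
  "conv_int f g y = integral {-1..y} (\<lambda>t. f (y - 1 - t) * g t)"

lemma integral_reflect_interval:
  fixes f :: "real \<Rightarrow> 'a::euclidean_space"
  shows "integral {a..b} (\<lambda>t. f (a + b - t)) = integral {a..b} f"
proof -
  have "integral {a..b} (\<lambda>t. f (a + b - t)) = integral {-b..-a} (\<lambda>u. f (u + (a + b)))"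
    using Henstock_Kurzweil_Integration.integral_reflect_real[of "-a" "-b" "\<lambda>u. f (u + (a + b))"]
    by simp
  also have "\<dots> = integral {a..b} f"
    using integral_shift_real_ivl[of a "a + b" b f] by simp
  finally show ?thesis .
qed

lemma conv_int_commute: "conv_int f g y = conv_int g f y"
  unfolding conv_int_def
  using integral_reflect_interval[of "-1" y "\<lambda>t. f (y - 1 - t) * g t"] by (simp add: mult.commute)

lemma continuous_on_conv_integrand:
  fixes f g :: "real \<Rightarrow> real"
  assumes "continuous_on UNIV f" "continuous_on UNIV g"
  shows "continuous_on S (\<lambda>t. f (y - 1 - t) * g t)"
proof -
  have "continuous_on S (\<lambda>t. y - 1 - t)"
    using continuous_on_diff[OF continuous_on_const continuous_on_id, of S "y - 1"] by simp
  then have "continuous_on S (\<lambda>t. f (y - 1 - t))"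
    by (rule continuous_on_compose2[OF assms(1)]) simp
  then show ?thesis
    by (intro continuous_intros continuous_on_subset[OF assms(2)]) auto
qed

lemma integrable_conv_integrand:
  fixes f g :: "real \<Rightarrow> real"
  assumes "continuous_on UNIV f" "continuous_on UNIV g"
  shows "(\<lambda>t. f (y - 1 - t) * g t) integrable_on {-1..y}"
  by (intro integrable_continuous_interval continuous_on_conv_integrand assms)

lemma conv_int_diff_scaled:
  assumes "continuous_on UNIV f" "continuous_on UNIV g" "continuous_on UNIV h"
  shows "conv_int f (\<lambda>t. \<alpha> * g t - \<beta> * h t) y = \<alpha> * conv_int f g y - \<beta> * conv_int f h y"
proof -
  have "conv_int f (\<lambda>t. \<alpha> * g t - \<beta> * h t) y
      = integral {-1..y} (\<lambda>t. \<alpha> * (f (y - 1 - t) * g t) - \<beta> * (f (y - 1 - t) * h t))"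
    unfolding conv_int_def by (rule arg_cong[where f = "integral _"]) (auto simp: algebra_simps)
  also have "\<dots> = \<alpha> * conv_int f g y - \<beta> * conv_int f h y"
    using integrable_cmul[OF integrable_conv_integrand[OF assms(1,2)], of \<alpha> y]
      integrable_cmul[OF integrable_conv_integrand[OF assms(1,3)], of \<beta> y]
    unfolding conv_int_def by (simp add: integral_diff)
  finally show ?thesis .
qed

lemma conv_int_linear_shift:
  assumes "continuous_on UNIV q1" "continuous_on UNIV q2" "continuous_on UNIV g"
  shows "conv_int (\<lambda>x. q1 x + x * q2 x) g y
    = conv_int q1 g y + y * conv_int q2 g y + conv_int q2 (\<lambda>t. (-1 - t) * g t) y"
proof -
  have g': "continuous_on UNIV (\<lambda>t. (-1 - t) * g t)"
    by (intro continuous_intros assms)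
  have "conv_int (\<lambda>x. q1 x + x * q2 x) g y
      = integral {-1..y} (\<lambda>t. q1 (y - 1 - t) * g t + y * (q2 (y - 1 - t) * g t)
          + q2 (y - 1 - t) * ((-1 - t) * g t))"
    unfolding conv_int_def by (rule arg_cong[where f = "integral _"]) (auto simp: algebra_simps)
  also have "\<dots> = conv_int q1 g y + y * conv_int q2 g y + conv_int q2 (\<lambda>t. (-1 - t) * g t) y"
    using integrable_conv_integrand[OF assms(1,3), of y]
      integrable_cmul[OF integrable_conv_integrand[OF assms(2,3)], of y y]
      integrable_conv_integrand[OF assms(2) g', of y]
    unfolding conv_int_def by (simp add: integral_add integrable_add)
  finally show ?thesis .
qed

lemma has_real_derivative_integral_from:
  assumes "continuous_on UNIV g" "a < y"
  shows "((\<lambda>z. integral {a..z} g) has_real_derivative g y) (at y)"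
proof -
  have "((\<lambda>z. integral {a..z} g) has_real_derivative g y) (at y within {a..y + 1})"
    using assms by (intro integral_has_real_derivative continuous_on_subset[OF assms(1)]) auto
  moreover have "at y within {a..y + 1} = at y"
    using assms by (intro at_within_Icc_at) auto
  ultimately show ?thesis by simp
qed

(* Induction on p = c + x q: in the integrand, x = y - 1 - t = y + (-1 - t) splits into
   a multiple of y and the new weight (-1 - t) on g, which is why g is generalised. *)
lemma conv_int_poly_has_derivative:
  assumes "continuous_on UNIV g" "-1 < y"
  shows "((\<lambda>z. conv_int (poly p) g z) has_real_derivative
           poly p (-1) * g y + conv_int (poly (pderiv p)) g y) (at y)"
  using assms(1)
proof (induction p arbitrary: g rule: pCons_induct)
  case 0
  then show ?case by (simp add: conv_int_def)
next
  case (pCons c p)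
  define h where "h t = (-1 - t) * g t" for t
  have poly_cont: "continuous_on UNIV (poly q)" for q :: "real poly"
    by (intro continuous_intros)
  have h: "continuous_on UNIV h"
    unfolding h_def by (intro continuous_intros pCons)
  have poly_pCons: "poly (pCons c p) = (\<lambda>x. c + x * poly p x)"
    by auto
  have poly_pderiv: "poly (pderiv (pCons c p)) = (\<lambda>x. poly p x + x * poly (pderiv p) x)"
    by (auto simp: pderiv_pCons)
  have split: "conv_int (poly (pCons c p)) g z
      = c * integral {-1..z} g + z * conv_int (poly p) g z + conv_int (poly p) h z" for z
    using conv_int_linear_shift[OF continuous_on_const poly_cont pCons.prems, of c p z]
    unfolding poly_pCons h_def by (simp add: conv_int_def)
  have deriv: "((\<lambda>z. c * integral {-1..z} g + z * conv_int (poly p) g z + conv_int (poly p) h z)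
      has_real_derivative c * g y + (y * (poly p (-1) * g y + conv_int (poly (pderiv p)) g y)
        + 1 * conv_int (poly p) g y) + (poly p (-1) * h y + conv_int (poly (pderiv p)) h y)) (at y)"
    by (intro DERIV_add DERIV_cmult DERIV_mult' DERIV_ident has_real_derivative_integral_from
        pCons.IH pCons.prems h assms(2))
  have pderiv_split: "conv_int (poly (pderiv (pCons c p))) g y
      = conv_int (poly p) g y + y * conv_int (poly (pderiv p)) g y + conv_int (poly (pderiv p)) h y"
    unfolding poly_pderiv h_def by (intro conv_int_linear_shift pCons.prems poly_cont)
  show ?case
    unfolding split using deriv by (rule DERIV_cong) (simp add: pderiv_split h_def algebra_simps)
qed

lemma pderiv_conv_int_expansion:
  assumes u: "\<And>y. y \<in> {-1<..<1} \<Longrightarrow> conv_int (poly G) (poly u) y = poly q y"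
    and du: "\<And>y. y \<in> {-1<..<1} \<Longrightarrow> conv_int (poly G) (poly (pderiv u)) y = poly r y"
  shows "pderiv q = smult (poly u (-1)) G + r"
proof (rule poly_eqI_on_infinite[of "{-1<..<1}"])
  fix y :: real
  assume y: "y \<in> {-1<..<1}"
  have "continuous_on UNIV (poly G)"
    by (intro continuous_intros)
  then have "((\<lambda>z. conv_int (poly u) (poly G) z) has_real_derivative
      poly u (-1) * poly G y + conv_int (poly (pderiv u)) (poly G) y) (at y)"
    using y by (intro conv_int_poly_has_derivative) auto
  then have "((\<lambda>z. conv_int (poly G) (poly u) z) has_real_derivative
      poly u (-1) * poly G y + poly r y) (at y)"
    by (simp only: conv_int_commute[of "poly u"] conv_int_commute[of "poly (pderiv u)"] du[OF y])
  then have "(poly q has_real_derivative poly u (-1) * poly G y + poly r y) (at y)"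
    by (rule has_field_derivative_transform_within_open[where S = "{-1<..<1}"])
      (use y in \<open>simp_all add: u\<close>)
  then show "poly (pderiv q) y = poly (smult (poly u (-1)) G + r) y"
    using DERIV_unique[OF poly_DERIV[of q y]] by simp
qed (simp add: infinite_Ioo)

section \<open>The coefficient recurrences\<close>

locale cheb_conv_expansion =
  fixes M N :: nat and a :: "nat \<Rightarrow> real" and R :: "nat \<Rightarrow> nat \<Rightarrow> real"
  assumes expansion: "\<And>n y. n \<le> N \<Longrightarrow> y \<in> {-1..1} \<Longrightarrow>
      integral {-1..y} (\<lambda>t. chebsum M a (y - 1 - t) * cheb n t)
        = (\<Sum>k\<le>M + N + 1. R k n * cheb k y)"
    and top_zero: "\<And>n. n \<le> N \<Longrightarrow> R (M + N + 2) n = 0"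
begin

definition kernel_poly :: "real poly" where
  "kernel_poly = (\<Sum>m\<le>M. smult (a m) (cheb_poly m))"

definition expansion_poly :: "nat \<Rightarrow> real poly" where
  "expansion_poly n = (\<Sum>k\<le>M + N + 1. smult (R k n) (cheb_poly k))"

lemma conv_int_cheb_eq_expansion_poly:
  assumes "n \<le> N" "y \<in> {-1..1}"
  shows "conv_int (poly kernel_poly) (cheb n) y = poly (expansion_poly n) y"
proof -
  have "poly kernel_poly = chebsum M a"
    by (auto simp: kernel_poly_def chebsum_def poly_sum)
  then show ?thesis
    using expansion[OF assms] by (simp add: conv_int_def expansion_poly_def poly_sum)
qed

lemma pderiv_expansion_poly_0: "pderiv (expansion_poly 0) = kernel_poly"
  using pderiv_conv_int_expansion[of kernel_poly 1 "expansion_poly 0" 0]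
    conv_int_cheb_eq_expansion_poly[of 0] by (simp add: conv_int_def)

lemma pderiv_expansion_poly_combination:
  assumes "Suc n \<le> N" "n' \<le> N"
    and antideriv: "pderiv (smult \<alpha> (cheb_poly (Suc n)) - smult \<beta> (cheb_poly n')) = cheb_poly n"
  shows "pderiv (smult \<alpha> (expansion_poly (Suc n)) - smult \<beta> (expansion_poly n')
      - smult (\<alpha> * (-1) ^ Suc n - \<beta> * (-1) ^ n') (expansion_poly 0)) = expansion_poly n"
proof -
  define u where "u = smult \<alpha> (cheb_poly (Suc n)) - smult \<beta> (cheb_poly n')"
  have cont: "continuous_on UNIV (poly p)" for p :: "real poly"
    by (intro continuous_intros)
  have poly_u: "poly u = (\<lambda>t. \<alpha> * poly (cheb_poly (Suc n)) t - \<beta> * poly (cheb_poly n') t)"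
    by (auto simp: u_def simp del: poly_cheb_poly)
  have "pderiv (smult \<alpha> (expansion_poly (Suc n)) - smult \<beta> (expansion_poly n'))
      = smult (poly u (-1)) kernel_poly + expansion_poly n"
  proof (rule pderiv_conv_int_expansion)
    fix y :: real
    assume "y \<in> {-1<..<1}"
    then show "conv_int (poly kernel_poly) (poly u) y
        = poly (smult \<alpha> (expansion_poly (Suc n)) - smult \<beta> (expansion_poly n')) y"
      unfolding poly_u conv_int_diff_scaled[OF cont cont cont]
      using \<open>y \<in> {-1<..<1}\<close> assms(1,2) by (simp add: conv_int_cheb_eq_expansion_poly)
    show "conv_int (poly kernel_poly) (poly (pderiv u)) y = poly (expansion_poly n) y"
      using \<open>y \<in> {-1<..<1}\<close> assms(1) by (simp add: u_def antideriv conv_int_cheb_eq_expansion_poly)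
  qed
  moreover have "poly u (-1) = \<alpha> * (-1) ^ Suc n - \<beta> * (-1) ^ n'"
    by (simp add: u_def poly_cheb_poly_minus_one del: poly_cheb_poly)
  ultimately show ?thesis
    by (simp add: pderiv_diff pderiv_smult pderiv_expansion_poly_0)
qed

lemma expansion_coeff_recurrence:
  assumes "Suc n \<le> N" "n' \<le> N"
    and antideriv: "pderiv (smult \<alpha> (cheb_poly (Suc n)) - smult \<beta> (cheb_poly n')) = cheb_poly n"
    and k: "1 \<le> k" "k \<le> M + N + 1"
  shows "2 * real k * (\<alpha> * R k (Suc n) - \<beta> * R k n' - (\<alpha> * (-1) ^ Suc n - \<beta> * (-1) ^ n') * R k 0)
    = eps_cheb k * R (k - 1) n - R (k + 1) n"
proof (rule cheb_coeffs_of_pderiv[OF _ _ k])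
  define c where "c = \<alpha> * (-1) ^ Suc n - \<beta> * (-1) ^ n'"
  have "smult \<alpha> (expansion_poly (Suc n)) - smult \<beta> (expansion_poly n') - smult c (expansion_poly 0)
      = (\<Sum>k\<le>M + N + 1. smult (\<alpha> * R k (Suc n)) (cheb_poly k) - smult (\<beta> * R k n') (cheb_poly k)
          - smult (c * R k 0) (cheb_poly k))"
    unfolding expansion_poly_def smult_sum_right smult_smult sum_subtractf ..
  then show "pderiv (\<Sum>k\<le>M + N + 1. smult (\<alpha> * R k (Suc n) - \<beta> * R k n'
        - (\<alpha> * (-1) ^ Suc n - \<beta> * (-1) ^ n') * R k 0) (cheb_poly k))
      = (\<Sum>k\<le>M + N + 1. smult (R k n) (cheb_poly k))"
    using pderiv_expansion_poly_combination[OF assms(1-3)]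
    by (simp only: c_def smult_diff_left expansion_poly_def)
  show "R (Suc (M + N + 1)) n = 0"
    using top_zero[of n] assms(1) by simp
qed

lemma recurrence_first:
  assumes "1 \<le> N" "1 \<le> k" "k \<le> M + N + 1"
  shows "R k 1 = - R k 0 + eps_cheb k / (2 * real k) * R (k - 1) 0 - 1 / (2 * real k) * R (k + 1) 0"
proof -
  have rec: "2 * real k * (R k 1 + R k 0) = eps_cheb k * R (k - 1) 0 - R (k + 1) 0"
    using expansion_coeff_recurrence[of 0 0 1 0 k] assms by (simp add: pderiv_pCons)
  have "R k 1 = - R k 0 + 2 * real k * (R k 1 + R k 0) / (2 * real k)"
    using assms(2) by simp
  also have "\<dots> = - R k 0 + (eps_cheb k * R (k - 1) 0 - R (k + 1) 0) / (2 * real k)"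
    by (simp only: rec)
  finally show ?thesis
    by (simp add: diff_divide_distrib)
qed

lemma recurrence_second:
  assumes "2 \<le> N" "1 \<le> k" "k \<le> M + N + 1"
  shows "R k 2 = R k 0 + 2 * eps_cheb k / real k * R (k - 1) 1 - 2 / real k * R (k + 1) 1"
proof -
  have "pderiv (smult (1 / 4) (cheb_poly 2) - smult 0 (cheb_poly 0)) = cheb_poly 1"
    by (simp add: pderiv_diff pderiv_smult pderiv_cheb_poly pderiv_pCons numeral_poly)
  then have rec: "2 * real k * (R k 2 / 4 - R k 0 / 4) = eps_cheb k * R (k - 1) 1 - R (k + 1) 1"
    using expansion_coeff_recurrence[of 1 0 "1 / 4" 0 k] assms by (simp add: numeral_2_eq_2)
  have "R k 2 = R k 0 + 2 * (2 * real k * (R k 2 / 4 - R k 0 / 4)) / real k"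
    using assms(2) by simp
  also have "\<dots> = R k 0 + 2 * (eps_cheb k * R (k - 1) 1 - R (k + 1) 1) / real k"
    by (simp only: rec)
  finally show ?thesis
    by (simp add: diff_divide_distrib right_diff_distrib)
qed

lemma recurrence_general:
  assumes "2 \<le> n" "n + 1 \<le> N" "1 \<le> k" "k \<le> M + N + 1"
  shows "R k (n + 1) = 2 * (-1) ^ n / (real n - 1) * R k 0
    + (real n + 1) / (real n - 1) * R k (n - 1)
    + eps_cheb k * (real n + 1) / real k * R (k - 1) n
    - (real n + 1) / real k * R (k + 1) n"
proof -
  define A B where "A = real n + 1" and "B = real n - 1"
  define E where "E = eps_cheb k * R (k - 1) n - R (k + 1) n"
  have pos: "A > 0" "B > 0" "real k > 0"
    using assms by (auto simp: A_def B_def)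
  note c = cheb_antiderivative_at_minus_one[OF assms(1), folded A_def B_def]
  have "2 * real k * (1 / (2 * A) * R k (Suc n) - 1 / (2 * B) * R k (n - 1)
      - (-1) ^ n / (A * B) * R k 0) = E"
    using expansion_coeff_recurrence[OF _ _ pderiv_cheb_antiderivative[OF assms(1)], of k,
        folded A_def B_def, unfolded c] assms
    by (simp add: E_def)
  then have "1 / (2 * A) * R k (Suc n) - 1 / (2 * B) * R k (n - 1) - (-1) ^ n / (A * B) * R k 0
      = E / (2 * real k)"
    using pos by (subst eq_divide_eq) (simp add: mult.commute)
  then have rec: "1 / (2 * A) * R k (Suc n)
      = E / (2 * real k) + 1 / (2 * B) * R k (n - 1) + (-1) ^ n / (A * B) * R k 0"
    by linarith
  have "R k (Suc n) = 2 * A * (1 / (2 * A) * R k (Suc n))"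
    using pos by simp
  also have "\<dots>
      = 2 * A * (E / (2 * real k) + 1 / (2 * B) * R k (n - 1) + (-1) ^ n / (A * B) * R k 0)"
    by (simp only: rec)
  also have "\<dots> = 2 * (-1) ^ n / B * R k 0 + A / B * R k (n - 1) + A / real k * E"
    using pos by (simp add: field_simps)
  finally show ?thesis
    by (simp add: A_def B_def E_def diff_divide_distrib right_diff_distrib)
qed

lemma degree_expansion_poly: "n \<le> N \<Longrightarrow> degree (expansion_poly n) \<le> M + n + 1"
proof (induction n rule: less_induct)
  case (less n)
  have degree_le_pderiv: "degree p \<le> Suc (degree (pderiv p))" for p :: "real poly"
    using degree_pderiv[of p] by linarith
  show ?case
  proof (cases n)
    case 0
    have "degree kernel_poly \<le> M"
      unfolding kernel_poly_def
      by (intro degree_sum_le)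
        (auto intro: order_trans[OF degree_smult_le] order_trans[OF degree_cheb_poly])
    then show ?thesis
      using 0 degree_le_pderiv[of "expansion_poly 0"] by (simp add: pderiv_expansion_poly_0)
  next
    case (Suc m)
    obtain \<alpha> \<beta> n' where "\<alpha> \<noteq> 0" "n' \<le> m"
      and antideriv: "pderiv (smult \<alpha> (cheb_poly (Suc m)) - smult \<beta> (cheb_poly n')) = cheb_poly m"
      using cheb_has_antiderivative by blast
    define c where "c = \<alpha> * (-1) ^ Suc m - \<beta> * (-1) ^ n'"
    define Q where "Q = smult \<alpha> (expansion_poly (Suc m)) - smult \<beta> (expansion_poly n')
      - smult c (expansion_poly 0)"
    have IH: "degree (expansion_poly i) \<le> M + i + 1" if "i \<le> m" for i
      using less.IH[of i] less.prems that Suc by simp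
    have "degree Q \<le> M + m + 2"
      using degree_le_pderiv[of Q] IH[of m] less.prems Suc \<open>n' \<le> m\<close>
        pderiv_expansion_poly_combination[OF _ _ antideriv]
      by (simp add: Q_def c_def)
    moreover have "smult \<alpha> (expansion_poly (Suc m))
        = Q + smult \<beta> (expansion_poly n') + smult c (expansion_poly 0)"
      by (simp add: Q_def)
    moreover have "degree (smult \<beta> (expansion_poly n')) \<le> M + m + 2"
      "degree (smult c (expansion_poly 0)) \<le> M + m + 2"
      using IH[of n'] IH[of 0] \<open>n' \<le> m\<close> by (auto intro: order_trans[OF degree_smult_le])
    ultimately have "degree (smult \<alpha> (expansion_poly (Suc m))) \<le> M + m + 2"
      by (metis degree_add_le)
    then show ?thesis
      using Suc \<open>\<alpha> \<noteq> 0\<close> by simp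
  qed
qed

lemma expansion_coeff_vanish:
  assumes "n \<le> N" "M + n + 1 < k" "k \<le> M + N + 1"
  shows "R k n = 0"
proof (rule triangular_sum_coeffs_eq_0[where p = cheb_poly and c = "\<lambda>k. R k n" and j = "M + n + 2"])
  show "coeff (\<Sum>k\<le>M + N + 1. smult (R k n) (cheb_poly k)) i = 0" if "M + n + 2 \<le> i" for i
    using degree_expansion_poly[OF assms(1)] that
    by (intro coeff_eq_0) (simp add: expansion_poly_def)
qed (use assms(2,3) degree_cheb_poly less_imp_neq[OF coeff_cheb_poly_pos] in auto)

lemma alternating_sum_expansion_coeffs:
  assumes "n \<le> N"
  shows "R 0 n = (\<Sum>j = 1..M + n + 1. (-1) ^ (j + 1) * R j n)"
proof -
  have "0 = poly (expansion_poly n) (-1)"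
    using conv_int_cheb_eq_expansion_poly[OF assms, of "-1"] by (simp add: conv_int_def)
  also have "\<dots> = (\<Sum>k\<le>M + N + 1. R k n * (-1) ^ k)"
    by (simp add: expansion_poly_def poly_sum poly_cheb_poly_minus_one del: poly_cheb_poly)
  also have "\<dots> = (\<Sum>k\<le>M + n + 1. R k n * (-1) ^ k)"
    by (rule sum.mono_neutral_right) (use assms expansion_coeff_vanish in auto)
  also have "\<dots> = R 0 n - (\<Sum>j = 1..M + n + 1. (-1) ^ (j + 1) * R j n)"
    by (simp add: atMost_atLeast0 sum.atLeast_Suc_atMost sum_negf[symmetric] mult.commute)
  finally show ?thesis
    by simp
qed

end

theorem theorem3p3:
  fixes M N :: nat and a :: "nat \<Rightarrow> real" and R :: "nat \<Rightarrow> nat \<Rightarrow> real"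
  assumes expansion: "\<And>n y. n \<le> N \<Longrightarrow> y \<in> {-1..1} \<Longrightarrow>
      integral {-1..y} (\<lambda>t. chebsum M a (y - 1 - t) * cheb n t)
        = (\<Sum>k\<le>M + N + 1. R k n * cheb k y)"
    and top_zero: "\<And>n. n \<le> N \<Longrightarrow> R (M + N + 2) n = 0"
  shows "(\<forall>k. 1 \<le> k \<and> k \<le> M + N \<longrightarrow>
            (N \<ge> 1 \<longrightarrow>
               R k 1 = - R k 0 + eps_cheb k / (2 * real k) * R (k - 1) 0
                       - 1 / (2 * real k) * R (k + 1) 0)
          \<and> (N \<ge> 2 \<longrightarrow>
               R k 2 = R k 0 + 2 * eps_cheb k / real k * R (k - 1) 1
                       - 2 / real k * R (k + 1) 1)
          \<and> (\<forall>n. 2 \<le> n \<and> n + 1 \<le> N \<longrightarrow>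
               R k (n + 1) = 2 * (-1) ^ n / (real n - 1) * R k 0
                 + (real n + 1) / (real n - 1) * R k (n - 1)
                 + eps_cheb k * (real n + 1) / real k * R (k - 1) n
                 - (real n + 1) / real k * R (k + 1) n))
       \<and> (\<forall>n. 1 \<le> n \<and> n \<le> N \<longrightarrow>
            R 0 n = (\<Sum>j = 1..M + n + 1. (-1) ^ (j + 1) * R j n))"
proof -
  interpret cheb_conv_expansion M N a R
    using expansion top_zero by unfold_locales
  show ?thesis
    using recurrence_first recurrence_second recurrence_general alternating_sum_expansion_coeffs
    by simp
qed

end
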